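(* Let $\lambda>0$. For all $x,y>0$, $$\frac{\Gamma(\lambda+y)}{\Gamma(y)}\, B\Big(\lambda, y; \frac{x}{x+y}\Big)=\Gamma(\lambda)-x^{\lambda}\int_0^\infty \frac{\gamma(y,yt)}{\Gamma(y)}\,t^{\lambda-1}e^{-xt}\,dt,$$ where $B(a_1,a_2;u)=\int_0^u t^{a_1-1}(1-t)^{a_2-1}\,dt$ is the incomplete Beta function and $\gamma(a,x)=\int_0^x e^{-t}t^{a-1}\,dt$ is the incomplete gamma function. *)

theory Defs
  imports "HOL-Analysis.Analysis"
begin

definition inc_beta :: "real \<Rightarrow> real \<Rightarrow> real \<Rightarrow> real" where
  "inc_beta a1 a2 u = (LBINT t=0..u. t powr (a1 - 1) * (1 - t) powr (a2 - 1))"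

definition lower_inc_gamma :: "real \<Rightarrow> real \<Rightarrow> real" where
  "lower_inc_gamma a x = (LBINT t=0..x. exp (- t) * t powr (a - 1))"

end

theory Submission
  imports Defs
begin

text \<open>
  With c = x/(x+y), the identity Gamma(lam+y)/Gamma(y) * B(lam,y) = Gamma(lam) reduces the claim
  to x^lam * J = Gamma(lam+y)/Gamma(y) * T, where J is the integral on the right-hand side and
  T = int_c^1 t^(lam-1) (1-t)^(y-1) dt is the tail of the Beta integral. Writing
  gamma(y, y t) = (y t)^y int_0^1 w^(y-1) exp(-y t w) dw and integrating in t first (Tonelli),
  the inner integral is a Gamma integral, so J = y^y Gamma(lam+y)/Gamma(y) * W with
  W = int_0^1 w^(y-1) (x + y w)^(-lam-y) dw. The substitution 1 - t = y w/(x + y w) gives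
  T = x^lam y^y W. All integrands are nonnegative, so the computation is carried out with
  ennreal-valued integrals.
\<close>

lemma borel_measurable_lower_inc_gamma [measurable]:
  "lower_inc_gamma a \<in> borel_measurable borel"
  unfolding lower_inc_gamma_def[abs_def] interval_lebesgue_integral_def
    set_lebesgue_integral_def einterval_def
  by measurable

lemma interval_integral_nonneg_Icc:
  fixes f :: "real \<Rightarrow> real"
  assumes "a \<le> b" and "\<And>t. t \<in> {a..b} \<Longrightarrow> 0 \<le> f t"
  shows "0 \<le> (LBINT t=a..b. f t)"
  using assms by (auto simp: interval_integral_Icc set_lebesgue_integral_def indicator_def
      intro!: integral_nonneg)

lemma ennreal_interval_integral_eq_nn_integral:
  fixes f :: "real \<Rightarrow> real"
  assumes "a \<le> b" and [measurable]: "f \<in> borel_measurable borel"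
    and nonneg: "\<And>t. t \<in> {a..b} \<Longrightarrow> 0 \<le> f t"
    and finite: "(\<integral>\<^sup>+t. ennreal (indicator {a..b} t * f t) \<partial>lborel) < \<infinity>"
  shows "ennreal (LBINT t=a..b. f t) = (\<integral>\<^sup>+t. ennreal (indicator {a..b} t * f t) \<partial>lborel)"
proof -
  have "integrable lborel (\<lambda>t. indicator {a..b} t * f t)"
    using nonneg by (intro integrableI_nonneg[OF _ _ finite]) (auto simp: indicator_def)
  then show ?thesis
    using assms(1) nonneg
    by (simp add: interval_integral_Icc set_lebesgue_integral_def nn_integral_eq_integral indicator_def)
qed

lemma interval_integral_Ioi_eq_nn_integral:
  fixes f :: "real \<Rightarrow> real"
  assumes [measurable]: "f \<in> borel_measurable borel" and "\<And>t. a < t \<Longrightarrow> 0 \<le> f t"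
  shows "(LBINT t=ereal a..\<infinity>. f t) = enn2real (\<integral>\<^sup>+t. ennreal (indicator {a<..} t * f t) \<partial>lborel)"
  using assms(2)
  by (simp add: interval_integral_Ioi set_lebesgue_integral_def indicator_def integral_eq_nn_integral)

lemma nn_integral_powr_exp_eq_Gamma:
  fixes a b :: real
  assumes a: "a > 0" and b: "b > 0"
  shows "(\<integral>\<^sup>+t. ennreal (indicator {0<..} t * (t powr (a - 1) * exp (- (b * t)))) \<partial>lborel)
       = ennreal (Gamma a / b powr a)"
proof -
  have "(\<integral>\<^sup>+t. ennreal (indicator {0<..} t * (t powr (a - 1) * exp (- (b * t)))) \<partial>lborel)
      = ennreal (1 / b) * (\<integral>\<^sup>+s. ennreal (indicator {0<..} (s / b) * ((s / b) powr (a - 1) * exp (- s))) \<partial>lborel)"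
    using nn_integral_real_affine[of "\<lambda>t. ennreal (indicator {0<..} t * (t powr (a - 1) * exp (- (b * t))))" "1 / b" 0] b
    by simp
  also have "\<dots> = ennreal (1 / b) * (\<integral>\<^sup>+s. ennreal (b powr (1 - a)) * ennreal (indicator {0..} s * s powr (a - 1) / exp s) \<partial>lborel)"
    using b by (intro arg_cong2[where f = "(*)"] nn_integral_cong refl)
      (auto simp: indicator_def powr_divide powr_diff exp_minus field_simps ennreal_mult'[symmetric] zero_less_divide_iff)
  also have "\<dots> = ennreal (1 / b) * (ennreal (b powr (1 - a)) * ennreal (Gamma a))"
    by (simp add: nn_integral_cmult Gamma_conv_nn_integral_real[OF a])
  also have "\<dots> = ennreal (Gamma a / b powr a)"
    using b Gamma_real_pos[OF a] by (simp add: ennreal_mult[symmetric] powr_diff field_simps)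
  finally show ?thesis .
qed

lemma lower_inc_gamma_nonneg: "0 \<le> T \<Longrightarrow> 0 \<le> lower_inc_gamma a T"
  unfolding lower_inc_gamma_def zero_ereal_def by (rule interval_integral_nonneg_Icc) auto

lemma ennreal_lower_inc_gamma_eq_nn_integral:
  assumes a: "a > 0" and T: "T \<ge> 0"
  shows "ennreal (lower_inc_gamma a T)
       = (\<integral>\<^sup>+s. ennreal (indicator {0..T} s * (exp (- s) * s powr (a - 1))) \<partial>lborel)"
  unfolding lower_inc_gamma_def zero_ereal_def
proof (rule ennreal_interval_integral_eq_nn_integral[OF T])
  have "(\<integral>\<^sup>+s. ennreal (indicator {0..T} s * (exp (- s) * s powr (a - 1))) \<partial>lborel)
      \<le> (\<integral>\<^sup>+s. ennreal (indicator {0..} s * s powr (a - 1) / exp s) \<partial>lborel)"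
    by (intro nn_integral_mono) (auto simp: indicator_def exp_minus field_simps)
  then show "(\<integral>\<^sup>+s. ennreal (indicator {0..T} s * (exp (- s) * s powr (a - 1))) \<partial>lborel) < \<infinity>"
    by (simp add: Gamma_conv_nn_integral_real[OF a, symmetric] le_less_trans)
qed auto

lemma ennreal_lower_inc_gamma_rescaled:
  assumes a: "a > 0" and T: "T > 0"
  shows "ennreal (lower_inc_gamma a T)
       = ennreal (T powr a) * (\<integral>\<^sup>+w. ennreal (indicator {0..1} w * (w powr (a - 1) * exp (- (T * w)))) \<partial>lborel)"
proof -
  have "ennreal (lower_inc_gamma a T)
      = ennreal T * (\<integral>\<^sup>+w. ennreal (indicator {0..T} (T * w) * (exp (- (T * w)) * (T * w) powr (a - 1))) \<partial>lborel)"
    using ennreal_lower_inc_gamma_eq_nn_integral[OF a] T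
      nn_integral_real_affine[of "\<lambda>s. ennreal (indicator {0..T} s * (exp (- s) * s powr (a - 1)))" T 0]
    by simp
  also have "\<dots> = ennreal T * (\<integral>\<^sup>+w. ennreal (T powr (a - 1)) * ennreal (indicator {0..1} w * (w powr (a - 1) * exp (- (T * w)))) \<partial>lborel)"
    using T by (intro arg_cong2[where f = "(*)"] nn_integral_cong refl)
      (auto simp: indicator_def powr_mult ennreal_mult'[symmetric] zero_le_mult_iff mult_ac)
  also have "\<dots> = ennreal (T * T powr (a - 1)) * (\<integral>\<^sup>+w. ennreal (indicator {0..1} w * (w powr (a - 1) * exp (- (T * w)))) \<partial>lborel)"
    using T by (simp add: nn_integral_cmult ennreal_mult mult.assoc)
  also have "T * T powr (a - 1) = T powr a"
    using T by (simp add: powr_mult_base)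
  finally show ?thesis .
qed

lemma ennreal_lower_inc_gamma_Laplace_integrand:
  fixes lam x a b t :: real
  assumes a: "a > 0" and b: "b > 0" and t: "t > 0"
  shows "ennreal (lower_inc_gamma a (b * t) / Gamma a * t powr (lam - 1) * exp (- x * t))
       = (\<integral>\<^sup>+w. ennreal (b powr a / Gamma a * w powr (a - 1) * indicator {0..1} w *
             (t powr (lam + a - 1) * exp (- ((x + b * w) * t)))) \<partial>lborel)"
proof -
  define D where "D = t powr (lam - 1) * exp (- x * t) / Gamma a"
  have D: "D \<ge> 0"
    unfolding D_def using a by (simp add: Gamma_real_pos)
  have "ennreal (lower_inc_gamma a (b * t) / Gamma a * t powr (lam - 1) * exp (- x * t))
      = ennreal D * ennreal (lower_inc_gamma a (b * t))"
    by (subst ennreal_mult'[OF D, symmetric]) (simp add: D_def mult_ac)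
  also have "\<dots> = ennreal (D * (b * t) powr a) *
      (\<integral>\<^sup>+w. ennreal (indicator {0..1} w * (w powr (a - 1) * exp (- (b * t * w)))) \<partial>lborel)"
    using ennreal_lower_inc_gamma_rescaled[OF a, of "b * t"] t b D by (simp add: ennreal_mult mult.assoc)
  also have "\<dots> = (\<integral>\<^sup>+w. ennreal (D * (b * t) powr a) *
      ennreal (indicator {0..1} w * (w powr (a - 1) * exp (- (b * t * w)))) \<partial>lborel)"
    by (simp add: nn_integral_cmult)
  also have "\<dots> = (\<integral>\<^sup>+w. ennreal (b powr a / Gamma a * w powr (a - 1) * indicator {0..1} w *
      (t powr (lam + a - 1) * exp (- ((x + b * w) * t)))) \<partial>lborel)"
  proof (intro nn_integral_cong)
    fix w :: real
    have scale: "D * (b * t) powr a = b powr a / Gamma a * t powr (lam + a - 1) * exp (- x * t)"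
      using t b by (simp add: D_def powr_mult powr_add[symmetric] field_simps)
    have "exp (- ((x + b * w) * t)) = exp (- x * t) * exp (- (b * t * w))"
      by (simp add: exp_add[symmetric] algebra_simps)
    then have product: "D * (b * t) powr a * (indicator {0..1} w * (w powr (a - 1) * exp (- (b * t * w))))
        = b powr a / Gamma a * w powr (a - 1) * indicator {0..1} w *
          (t powr (lam + a - 1) * exp (- ((x + b * w) * t)))"
      unfolding scale by (simp add: mult_ac)
    show "ennreal (D * (b * t) powr a) * ennreal (indicator {0..1} w * (w powr (a - 1) * exp (- (b * t * w))))
        = ennreal (b powr a / Gamma a * w powr (a - 1) * indicator {0..1} w *
            (t powr (lam + a - 1) * exp (- ((x + b * w) * t))))"
      unfolding product[symmetric] using t b D by (intro ennreal_mult'[symmetric]) simp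
  qed
  finally show ?thesis .
qed

lemma nn_integral_Gamma_kernel:
  fixes lam x a b w C :: real
  assumes lam: "lam > 0" and x: "x > 0" and a: "a > 0" and b: "b > 0" and C: "C \<ge> 0"
  shows "(\<integral>\<^sup>+t. ennreal (C * w powr (a - 1) * indicator {0..1} w *
            (indicator {0<..} t * (t powr (lam + a - 1) * exp (- ((x + b * w) * t))))) \<partial>lborel)
       = ennreal (C * Gamma (lam + a)) *
         ennreal (indicator {0..1} w * (w powr (a - 1) * (x + b * w) powr (- (lam + a))))"
proof (cases "w \<in> {0..1}")
  case True
  then have xbw: "x + b * w > 0"
    using x b by (simp add: add_pos_nonneg)
  have "(\<integral>\<^sup>+t. ennreal (C * w powr (a - 1) * indicator {0..1} w *
            (indicator {0<..} t * (t powr (lam + a - 1) * exp (- ((x + b * w) * t))))) \<partial>lborel)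
      = ennreal (C * w powr (a - 1)) *
        (\<integral>\<^sup>+t. ennreal (indicator {0<..} t * (t powr (lam + a - 1) * exp (- ((x + b * w) * t)))) \<partial>lborel)"
    using True C by (simp add: ennreal_mult nn_integral_cmult)
  also have "\<dots> = ennreal (C * w powr (a - 1)) * ennreal (Gamma (lam + a) / (x + b * w) powr (lam + a))"
    using nn_integral_powr_exp_eq_Gamma[of "lam + a" "x + b * w"] lam a xbw by (simp add: diff_add_eq)
  also have "\<dots> = ennreal (C * Gamma (lam + a)) *
      ennreal (indicator {0..1} w * (w powr (a - 1) * (x + b * w) powr (- (lam + a))))"
    using True C lam a unfolding powr_minus_divide
    by (simp add: ennreal_mult'[symmetric] Gamma_real_pos field_simps)
  finally show ?thesis .
qed simp

lemma nn_integral_lower_inc_gamma_Laplace: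
  fixes lam x a b :: real
  assumes lam: "lam > 0" and x: "x > 0" and a: "a > 0" and b: "b > 0"
  shows "(\<integral>\<^sup>+t. ennreal (indicator {0<..} t *
            (lower_inc_gamma a (b * t) / Gamma a * t powr (lam - 1) * exp (- x * t))) \<partial>lborel)
       = ennreal (b powr a * Gamma (lam + a) / Gamma a) *
         (\<integral>\<^sup>+w. ennreal (indicator {0..1} w * (w powr (a - 1) * (x + b * w) powr (- (lam + a)))) \<partial>lborel)"
proof -
  define C where "C = b powr a / Gamma a"
  have C: "C \<ge> 0"
    unfolding C_def using a b by (simp add: Gamma_real_pos)
  define \<Phi> where "\<Phi> t w = ennreal (C * w powr (a - 1) * indicator {0..1} w *
      (indicator {0<..} t * (t powr (lam + a - 1) * exp (- ((x + b * w) * t)))))" for t w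
  have fibre: "ennreal (indicator {0<..} t * (lower_inc_gamma a (b * t) / Gamma a * t powr (lam - 1) * exp (- x * t)))
      = (\<integral>\<^sup>+w. \<Phi> t w \<partial>lborel)" for t
  proof (cases "t > 0")
    case True
    then show ?thesis
      using ennreal_lower_inc_gamma_Laplace_integrand[OF a b True, of lam x] by (simp add: \<Phi>_def C_def)
  qed (simp add: \<Phi>_def)
  have "(\<integral>\<^sup>+t. ennreal (indicator {0<..} t *
            (lower_inc_gamma a (b * t) / Gamma a * t powr (lam - 1) * exp (- x * t))) \<partial>lborel)
      = (\<integral>\<^sup>+t. \<integral>\<^sup>+w. \<Phi> t w \<partial>lborel \<partial>lborel)"
    by (simp only: fibre)
  also have "\<dots> = (\<integral>\<^sup>+w. \<integral>\<^sup>+t. \<Phi> t w \<partial>lborel \<partial>lborel)"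
    by (rule lborel_pair.Fubini'[symmetric]) (simp add: \<Phi>_def case_prod_unfold)
  also have "\<dots> = ennreal (C * Gamma (lam + a)) *
      (\<integral>\<^sup>+w. ennreal (indicator {0..1} w * (w powr (a - 1) * (x + b * w) powr (- (lam + a)))) \<partial>lborel)"
    using nn_integral_Gamma_kernel[OF lam x a b C]
    by (simp add: \<Phi>_def nn_integral_cmult)
  finally show ?thesis
    by (simp add: C_def)
qed

lemma inc_beta_nonneg: "0 \<le> u \<Longrightarrow> 0 \<le> inc_beta a b u"
  unfolding inc_beta_def zero_ereal_def by (rule interval_integral_nonneg_Icc) auto

lemma inc_beta_add_tail:
  assumes a: "a > 0" and b: "b > 0" and u: "0 \<le> u" "u \<le> 1"
  shows "ennreal (inc_beta a b u) +
           (\<integral>\<^sup>+t. ennreal (indicator {u<..1} t * (t powr (a - 1) * (1 - t) powr (b - 1))) \<partial>lborel)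
       = ennreal (Beta a b)"
proof -
  define f where "f t = t powr (a - 1) * (1 - t) powr (b - 1)" for t :: real
  have Beta: "(\<integral>\<^sup>+t. ennreal (indicator {0..1} t * f t) \<partial>lborel) = ennreal (Beta a b)"
    unfolding f_def by (rule nn_integral_has_integral_lebesgue[OF _ has_integral_Beta_real[OF a b]]) auto
  have "ennreal (inc_beta a b u) = (\<integral>\<^sup>+t. ennreal (indicator {0..u} t * f t) \<partial>lborel)"
    unfolding inc_beta_def f_def zero_ereal_def
  proof (rule ennreal_interval_integral_eq_nn_integral[OF u(1)])
    have "(\<integral>\<^sup>+t. ennreal (indicator {0..u} t * f t) \<partial>lborel) \<le> (\<integral>\<^sup>+t. ennreal (indicator {0..1} t * f t) \<partial>lborel)"
      using u by (intro nn_integral_mono) (auto simp: indicator_def f_def)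
    also have "\<dots> < \<infinity>"
      by (simp add: Beta)
    finally show "(\<integral>\<^sup>+t. ennreal (indicator {0..u} t * (t powr (a - 1) * (1 - t) powr (b - 1))) \<partial>lborel) < \<infinity>"
      by (simp add: f_def)
  qed auto
  also have "\<dots> + (\<integral>\<^sup>+t. ennreal (indicator {u<..1} t * f t) \<partial>lborel)
      = (\<integral>\<^sup>+t. ennreal (indicator {0..u} t * f t) + ennreal (indicator {u<..1} t * f t) \<partial>lborel)"
    by (rule nn_integral_add[symmetric]) (auto simp: f_def)
  also have "\<dots> = (\<integral>\<^sup>+t. ennreal (indicator {0..1} t * f t) \<partial>lborel)"
    using u by (intro nn_integral_cong) (auto simp: indicator_def f_def)
  finally show ?thesis
    using Beta by (simp add: f_def)
qed

lemma beta_substitution_integrand: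
  fixes a b x y w :: real
  assumes x: "x > 0" and y: "y > 0" and w: "w \<ge> 0"
  shows "(y * w / (x + y * w)) powr (b - 1) * (1 - y * w / (x + y * w)) powr (a - 1) * (x * y / (x + y * w)\<^sup>2)
       = x powr a * y powr b * (w powr (b - 1) * (x + y * w) powr (- (a + b)))"
proof -
  define D where "D = x + y * w"
  have D: "D > 0"
    unfolding D_def using x y w by (simp add: add_pos_nonneg)
  have "1 - y * w / D = x / D"
    using D by (simp add: D_def field_simps)
  then have base: "(y * w / D) powr (b - 1) * (1 - y * w / D) powr (a - 1)
      = y powr (b - 1) * w powr (b - 1) * x powr (a - 1) / (D powr (b - 1) * D powr (a - 1))"
    using x y w D by (simp add: powr_divide powr_mult)
  have "D powr (a + b) = D powr ((b - 1) + (a - 1) + 2)"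
    by (simp add: algebra_simps)
  also have "\<dots> = D powr (b - 1) * D powr (a - 1) * D\<^sup>2"
    using D by (simp only: powr_add powr_numeral)
  finally have "D powr (- (a + b)) = 1 / (D powr (b - 1) * D powr (a - 1) * D\<^sup>2)"
    by (simp only: powr_minus_divide)
  moreover have "x powr a = x powr (a - 1) * x" "y powr b = y powr (b - 1) * y"
    using x y by (simp_all add: powr_mult_base mult.commute)
  ultimately show ?thesis
    unfolding D_def[symmetric] base using D by (simp add: field_simps)
qed

lemma nn_integral_beta_tail_reflect:
  fixes a b u :: real
  shows "(\<integral>\<^sup>+t. ennreal (indicator {u<..1} t * (t powr (a - 1) * (1 - t) powr (b - 1))) \<partial>lborel)
       = (\<integral>\<^sup>+s. ennreal (s powr (b - 1) * (1 - s) powr (a - 1) * indicator {0..1 - u} s) \<partial>lborel)"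
proof -
  have "(\<integral>\<^sup>+t. ennreal (indicator {u<..1} t * (t powr (a - 1) * (1 - t) powr (b - 1))) \<partial>lborel)
      = (\<integral>\<^sup>+s. ennreal (indicator {u<..1} (1 - s) * ((1 - s) powr (a - 1) * s powr (b - 1))) \<partial>lborel)"
    using nn_integral_real_affine[of "\<lambda>t. ennreal (indicator {u<..1} t * (t powr (a - 1) * (1 - t) powr (b - 1)))" "-1" 1]
    by simp
  also have "\<dots> = (\<integral>\<^sup>+s. ennreal (s powr (b - 1) * (1 - s) powr (a - 1) * indicator {0..1 - u} s) \<partial>lborel)"
    by (intro nn_integral_cong_AE eventually_mono[OF AE_lborel_singleton[of "1 - u"]])
      (auto simp: indicator_def mult_ac)
  finally show ?thesis .
qed

lemma nn_integral_beta_tail_substitution: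
  fixes a b x y :: real
  assumes x: "x > 0" and y: "y > 0"
  shows "(\<integral>\<^sup>+t. ennreal (indicator {x / (x + y)<..1} t * (t powr (a - 1) * (1 - t) powr (b - 1))) \<partial>lborel)
       = ennreal (x powr a * y powr b) *
         (\<integral>\<^sup>+w. ennreal (indicator {0..1} w * (w powr (b - 1) * (x + y * w) powr (- (a + b)))) \<partial>lborel)"
proof -
  define f where "f s = s powr (b - 1) * (1 - s) powr (a - 1)" for s :: real
  define g where "g w = y * w / (x + y * w)" for w :: real
  define g' where "g' w = x * y / (x + y * w)\<^sup>2" for w :: real
  have pos: "x + y * w > 0" if "w \<in> {0..1}" for w
    using that x y by (simp add: add_pos_nonneg)
  have "{0..1 - x / (x + y)} = {g 0..g 1}"
    using x y by (simp add: g_def field_simps)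
  then have "(\<integral>\<^sup>+t. ennreal (indicator {x / (x + y)<..1} t * (t powr (a - 1) * (1 - t) powr (b - 1))) \<partial>lborel)
      = (\<integral>\<^sup>+s. ennreal (f s * indicator {g 0..g 1} s) \<partial>lborel)"
    unfolding f_def using nn_integral_beta_tail_reflect[of "x / (x + y)" a b] by (simp only:)
  also have "\<dots> = (\<integral>\<^sup>+w. ennreal (f (g w) * g' w * indicator {0..1} w) \<partial>lborel)"
  proof (rule nn_integral_substitution)
    show "set_borel_measurable borel {g 0..g 1} f"
      unfolding set_borel_measurable_def f_def by measurable
    show "(g has_real_derivative g' w) (at w)" if "w \<in> {0..1}" for w
      using pos[OF that] unfolding g_def g'_def
      by (auto intro!: derivative_eq_intros simp: field_simps power2_eq_square)
    show "continuous_on {0..1} g'"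
      unfolding g'_def by (intro continuous_intros) (use pos in fastforce)
    show "0 \<le> g' w" for w
      unfolding g'_def using x y by simp
  qed simp
  also have "\<dots> = (\<integral>\<^sup>+w. ennreal (x powr a * y powr b) *
      ennreal (indicator {0..1} w * (w powr (b - 1) * (x + y * w) powr (- (a + b)))) \<partial>lborel)"
    using beta_substitution_integrand[OF x y]
    by (intro nn_integral_cong) (simp add: f_def g_def g'_def indicator_def ennreal_mult'[symmetric])
  finally show ?thesis
    by (simp add: nn_integral_cmult)
qed

lemma inc_beta_eq_Beta_minus_tail:
  fixes a b x y :: real
  assumes a: "a > 0" and b: "b > 0" and x: "x > 0" and y: "y > 0"
  shows "inc_beta a b (x / (x + y)) = Beta a b - x powr a * y powr b *
           enn2real (\<integral>\<^sup>+w. ennreal (indicator {0..1} w * (w powr (b - 1) * (x + y * w) powr (- (a + b)))) \<partial>lborel)"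
proof -
  define W where "W = (\<integral>\<^sup>+w. ennreal (indicator {0..1} w * (w powr (b - 1) * (x + y * w) powr (- (a + b)))) \<partial>lborel)"
  have c: "0 \<le> x / (x + y)" "x / (x + y) \<le> 1"
    using x y by simp_all
  have split: "ennreal (inc_beta a b (x / (x + y))) + ennreal (x powr a * y powr b) * W = ennreal (Beta a b)"
    using inc_beta_add_tail[OF a b c] nn_integral_beta_tail_substitution[OF x y, of a b]
    by (simp add: W_def)
  then obtain w where w: "W = ennreal w" "0 \<le> w"
    using x y by (cases W) (auto simp: ennreal_mult_top)
  have "Beta a b > 0"
    using a b by (simp add: Beta_def Gamma_real_pos)
  then have "inc_beta a b (x / (x + y)) + x powr a * y powr b * w = Beta a b"
    using split w c
    by (simp add: inc_beta_nonneg ennreal_plus[symmetric] ennreal_mult'[symmetric] del: ennreal_plus)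
  then show ?thesis
    unfolding W_def[symmetric] w(1) using w(2) by simp
qed

lemma lower_inc_gamma_Laplace:
  fixes lam x a b :: real
  assumes lam: "lam > 0" and x: "x > 0" and a: "a > 0" and b: "b > 0"
  shows "(LBINT t=0..\<infinity>. lower_inc_gamma a (b * t) / Gamma a * t powr (lam - 1) * exp (- x * t))
       = b powr a * Gamma (lam + a) / Gamma a *
         enn2real (\<integral>\<^sup>+w. ennreal (indicator {0..1} w * (w powr (a - 1) * (x + b * w) powr (- (lam + a)))) \<partial>lborel)"
proof -
  have "(LBINT t=0..\<infinity>. lower_inc_gamma a (b * t) / Gamma a * t powr (lam - 1) * exp (- x * t))
      = enn2real (\<integral>\<^sup>+t. ennreal (indicator {0<..} t *
          (lower_inc_gamma a (b * t) / Gamma a * t powr (lam - 1) * exp (- x * t))) \<partial>lborel)"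
    unfolding zero_ereal_def
    by (rule interval_integral_Ioi_eq_nn_integral)
      (use a b in \<open>auto simp: lower_inc_gamma_nonneg Gamma_real_pos\<close>)
  also have "\<dots> = enn2real (ennreal (b powr a * Gamma (lam + a) / Gamma a) *
      (\<integral>\<^sup>+w. ennreal (indicator {0..1} w * (w powr (a - 1) * (x + b * w) powr (- (lam + a)))) \<partial>lborel))"
    unfolding nn_integral_lower_inc_gamma_Laplace[OF lam x a b] ..
  also have "\<dots> = b powr a * Gamma (lam + a) / Gamma a *
      enn2real (\<integral>\<^sup>+w. ennreal (indicator {0..1} w * (w powr (a - 1) * (x + b * w) powr (- (lam + a)))) \<partial>lborel)"
    using a b lam by (simp add: enn2real_mult Gamma_real_pos)
  finally show ?thesis .
qed

theorem lemma2p1: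
  fixes lam x y :: real
  assumes "lam > 0" and "x > 0" and "y > 0"
  shows "Gamma (lam + y) / Gamma y * inc_beta lam y (x / (x + y))
       = Gamma lam - x powr lam *
           (LBINT t=0..\<infinity>. lower_inc_gamma y (y * t) / Gamma y * t powr (lam - 1) * exp (- x * t))"
proof -
  note lam = assms(1) and x = assms(2) and y = assms(3)
  define W where "W = enn2real (\<integral>\<^sup>+w. ennreal (indicator {0..1} w *
      (w powr (y - 1) * (x + y * w) powr (- (lam + y)))) \<partial>lborel)"
  have Gamma_pos: "Gamma y > 0" "Gamma (lam + y) > 0"
    using lam y by (simp_all add: Gamma_real_pos)
  have Gamma_lam: "Gamma lam = Gamma (lam + y) / Gamma y * Beta lam y"
    using Gamma_pos by (simp add: Beta_def)
  have inc_beta: "inc_beta lam y (x / (x + y)) = Beta lam y - x powr lam * y powr y * W"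
    using inc_beta_eq_Beta_minus_tail[OF lam y x y] by (simp add: W_def)
  have Laplace: "(LBINT t=0..\<infinity>. lower_inc_gamma y (y * t) / Gamma y * t powr (lam - 1) * exp (- x * t))
      = y powr y * Gamma (lam + y) / Gamma y * W"
    using lower_inc_gamma_Laplace[OF lam x y y] by (simp add: W_def)
  show ?thesis
    unfolding inc_beta Laplace Gamma_lam using Gamma_pos by (simp add: field_simps)
qed

end
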